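(* Consider the iteration $\hat P_{i+1}=\mathcal H\big(\mathcal Q(\hat P_i)+\Delta Q_i\big)$, $i\in\mathbb Z_+$, with $\hat P_0\in\mathbb S^n_+$ and $\Delta Q_i\in\mathbb S^{n+m}$, and let $\|\Delta Q\|_\infty=\sup_i\|\Delta Q_i\|_2$. For every $\hat P_0\in\mathbb S^n_+$ there exist $d^*>0$, a $\mathcal{KL}$-function $\beta$ and a $\mathcal K$-function $\tilde\gamma$ such that whenever $\|\Delta Q\|_\infty<d^*$ the iteration is well defined and $$\|\hat P_i-P^*\|_2\le\beta(\|\hat P_0-P^*\|_2,i)+\tilde\gamma(\|\Delta Q\|_\infty)\quad\text{for all } i\in\mathbb Z_+.$$
   Context: Let $n,m\ge 1$, $A\in\mathbb R^{n\times n}$, $B\in\mathbb R^{n\times m}$, $S\in\mathbb S^n_{++}$, $R\in\mathbb S^m_{++}$, with $(A,B)$ stabilizable. Here $\mathbb S^n$, $\mathbb S^n_+$, $\mathbb S^n_{++}$ denote the real symmetric, symmetric positive semidefinite, and symmetric positive definite $n\times n$ matrices; $\|\cdot\|_2$ is the spectral norm. For $P\in\mathbb S^n_+$ define the Hamiltonian $\mathcal Q(P)=\begin{pmatrix}A^\top PA+S & A^\top PB\\ B^\top PA & B^\top PB+R\end{pmatrix}\in\mathbb S^{n+m}$. For $Q\in\mathbb R^{(n+m)\times(n+m)}$ partitioned as $Q=\begin{pmatrix}[Q]_{xx} & [Q]_{ux}^\top\\ [Q]_{ux} & [Q]_{uu}\end{pmatrix}$ with $[Q]_{xx}\in\mathbb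 R^{n\times n}$, $[Q]_{uu}\in\mathbb R^{m\times m}$ invertible, define the Schur complement $\mathcal H(Q)=[Q]_{xx}-[Q]_{ux}^\top[Q]_{uu}^{-1}[Q]_{ux}$. $P^*\in\mathbb S^n_{++}$ denotes the unique positive definite solution of $P=\mathcal H(\mathcal Q(P))$ (the discrete algebraic Riccati equation). Class $\mathcal K$: continuous, strictly increasing functions $\mathbb R_+\to\mathbb R_+$ vanishing at $0$. Class $\mathcal{KL}$: $\beta:\mathbb R_+\times\mathbb Z_+\to\mathbb R_+$ with $\beta(\cdot,i)\in\mathcal K$ for each $i$ and $\beta(r,i)\downarrow0$ as $i\to\infty$ for each $r\ge0$. *)

theory Defs
  imports "HOL-Analysis.Analysis"
begin

text \<open>Matrices are real^'c^'r (r rows, c columns). The (n+m)x(n+m) matrices are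
indexed by the sum type 'n + 'm: Inl indices form the x-block, Inr indices the u-block.\<close>

definition sym_mat :: "real^'n^'n \<Rightarrow> bool" where
  "sym_mat M \<longleftrightarrow> transpose M = M"

definition psd_mat :: "real^'n^'n \<Rightarrow> bool" where
  "psd_mat M \<longleftrightarrow> sym_mat M \<and> (\<forall>x. 0 \<le> x \<bullet> (M *v x))"

definition pd_mat :: "real^'n^'n \<Rightarrow> bool" where
  "pd_mat M \<longleftrightarrow> sym_mat M \<and> (\<forall>x. x \<noteq> 0 \<longrightarrow> 0 < x \<bullet> (M *v x))"

definition spec_norm :: "real^'c^'r \<Rightarrow> real" where
  "spec_norm M = onorm (\<lambda>x. M *v x)"

definition cmat :: "real^'c^'r \<Rightarrow> complex^'c^'r" where
  "cmat M = (\<chi> i j. complex_of_real (M $ i $ j))"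

definition is_eigenvalue :: "real^'n^'n \<Rightarrow> complex \<Rightarrow> bool" where
  "is_eigenvalue M z \<longleftrightarrow> (\<exists>v::complex^'n. v \<noteq> 0 \<and> cmat M *v v = z *s v)"

definition schur_stable :: "real^'n^'n \<Rightarrow> bool" where
  "schur_stable M \<longleftrightarrow> (\<forall>z. is_eigenvalue M z \<longrightarrow> cmod z < 1)"

definition stabilizable :: "real^'n^'n \<Rightarrow> real^'m^'n \<Rightarrow> bool" where
  "stabilizable A B \<longleftrightarrow> (\<exists>K::real^'n^'m. schur_stable (A + B ** K))"

definition block_mat ::
  "real^('n::finite)^'n \<Rightarrow> real^'m^'n \<Rightarrow> real^'n^'m \<Rightarrow> real^('m::finite)^'m \<Rightarrow> real^('n+'m)^('n+'m)" where
  "block_mat Mxx Mxu Mux Muu = (\<chi> i j. case i of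
      Inl a \<Rightarrow> (case j of Inl b \<Rightarrow> Mxx $ a $ b | Inr b \<Rightarrow> Mxu $ a $ b)
    | Inr a \<Rightarrow> (case j of Inl b \<Rightarrow> Mux $ a $ b | Inr b \<Rightarrow> Muu $ a $ b))"

definition blk_xx :: "real^('n::finite+'m::finite)^('n+'m) \<Rightarrow> real^'n^'n" where
  "blk_xx Q = (\<chi> a b. Q $ Inl a $ Inl b)"
definition blk_ux :: "real^('n::finite+'m::finite)^('n+'m) \<Rightarrow> real^'n^'m" where
  "blk_ux Q = (\<chi> a b. Q $ Inr a $ Inl b)"
definition blk_uu :: "real^('n::finite+'m::finite)^('n+'m) \<Rightarrow> real^'m^'m" where
  "blk_uu Q = (\<chi> a b. Q $ Inr a $ Inr b)"

definition hamQ :: "real^('n::finite)^'n \<Rightarrow> real^'m^'n \<Rightarrow> real^'n^'n \<Rightarrow> real^('m::finite)^'m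
    \<Rightarrow> real^'n^'n \<Rightarrow> real^('n+'m)^('n+'m)" where
  "hamQ A B S R P = block_mat (transpose A ** P ** A + S) (transpose A ** P ** B)
                              (transpose B ** P ** A) (transpose B ** P ** B + R)"

definition schurH :: "real^('n::finite+'m::finite)^('n+'m) \<Rightarrow> real^'n^'n" where
  "schurH Q = blk_xx Q - transpose (blk_ux Q) ** matrix_inv (blk_uu Q) ** blk_ux Q"

primrec riccati_iter :: "real^('n::finite)^'n \<Rightarrow> real^'m^'n \<Rightarrow> real^'n^'n \<Rightarrow> real^('m::finite)^'m
    \<Rightarrow> real^'n^'n \<Rightarrow> (nat \<Rightarrow> real^('n+'m)^('n+'m)) \<Rightarrow> nat \<Rightarrow> real^'n^'n" where
  "riccati_iter A B S R P0 dQ 0 = P0"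
| "riccati_iter A B S R P0 dQ (Suc i) =
     schurH (hamQ A B S R (riccati_iter A B S R P0 dQ i) + dQ i)"

definition class_K :: "(real \<Rightarrow> real) \<Rightarrow> bool" where
  "class_K f \<longleftrightarrow> continuous_on {0..} f \<and> strict_mono_on {0..} f \<and> f 0 = 0
                 \<and> (\<forall>r\<ge>0. 0 \<le> f r)"

definition class_KL :: "(real \<Rightarrow> nat \<Rightarrow> real) \<Rightarrow> bool" where
  "class_KL \<beta> \<longleftrightarrow> (\<forall>i. class_K (\<lambda>r. \<beta> r i))
     \<and> (\<forall>r\<ge>0. antimono (\<lambda>i. \<beta> r i) \<and> (\<lambda>i. \<beta> r i) \<longlonglongrightarrow> 0)"

end

theory Submission
  imports Defs
begin

text \<open>
  The iterate \<open>P\<^sub>i\<close> is the value matrix of an \<open>i\<close>-step linear-quadratic problem with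
  terminal cost \<open>P\<^sub>0\<close> whose stage costs are perturbed by \<open>\<Delta>Q\<close>: by the Schur complement formula,
  \<open>x\<^sup>T P\<^sub>i\<^sub>+\<^sub>1 x\<close> is the minimum over \<open>u\<close> of the quadratic form of \<open>Q(P\<^sub>i) + \<Delta>Q\<^sub>i\<close> at \<open>(x, u)\<close>.
  If \<open>\<lambda>\<close> bounds \<open>S\<close> and \<open>R\<close> from below and \<open>\<parallel>\<Delta>Q\<parallel>\<^sub>\<infinity> < \<lambda>/2\<close>, the perturbed stage costs stay
  coercive, so all iterates are positive semidefinite and all Schur complements exist.

  Using the feedback that is optimal for \<open>P\<^sup>*\<close> in the problem for \<open>P\<^sub>i\<close> gives
  \<open>x\<^sup>T (P\<^sub>i - P\<^sup>*) x \<le> (r \<rho>\<^sup>i / \<lambda>\<^sub>P + c d) x\<^sup>T P\<^sup>* x\<close> with \<open>\<rho> = 1 - \<lambda>/p < 1\<close>, where \<open>\<lambda>\<^sub>P \<le> P\<^sup>* \<le> p\<close>,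
  \<open>r = \<parallel>P\<^sub>0 - P\<^sup>*\<parallel>\<close> and \<open>d = \<parallel>\<Delta>Q\<parallel>\<^sub>\<infinity>\<close>. Conversely, along the optimal closed loop of the
  perturbed problem the stage costs sum to at most \<open>x\<^sup>T P\<^sub>i x = O(\<parallel>x\<parallel>\<^sup>2)\<close>, and comparing with
  \<open>P\<^sup>*\<close> step by step bounds \<open>x\<^sup>T (P\<^sup>* - P\<^sub>i) x\<close> by \<open>r \<parallel>x\<^sub>i\<parallel>\<^sup>2 + O(d) \<parallel>x\<parallel>\<^sup>2\<close>; stopping the comparison
  at each intermediate time and averaging gives an \<open>O(1/i)\<close> decay. Two-sided bounds on the
  quadratic form of the symmetric matrix \<open>P\<^sub>i - P\<^sup>*\<close> bound its spectral norm.
\<close>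

section \<open>Block vectors and quadratic forms\<close>

definition qf :: "real^'n^'n \<Rightarrow> real^'n \<Rightarrow> real" where
  "qf M x = x \<bullet> (M *v x)"

definition join :: "real^'n \<Rightarrow> real^'m \<Rightarrow> real^('n+'m)" where
  "join x u = (\<chi> i. case i of Inl a \<Rightarrow> x$a | Inr b \<Rightarrow> u$b)"

definition blk_xu :: "real^('n::finite+'m::finite)^('n+'m) \<Rightarrow> real^'m^'n" where
  "blk_xu Q = (\<chi> a b. Q $ Inl a $ Inr b)"

lemma sum_UNIV_Plus:
  "(\<Sum>i\<in>(UNIV::('a::finite+'b::finite) set). f i) = (\<Sum>a\<in>UNIV. f (Inl a)) + (\<Sum>b\<in>UNIV. f (Inr b))"
  by (subst UNIV_Plus_UNIV[symmetric], subst sum.Plus) (simp_all add: comp_def)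

lemma inner_join: "join x u \<bullet> join y v = x \<bullet> y + u \<bullet> v"
  unfolding join_def inner_vec_def by (simp add: sum_UNIV_Plus)

lemma norm_join_power2: "(norm (join x u))\<^sup>2 = (norm x)\<^sup>2 + (norm u)\<^sup>2"
  by (simp add: power2_norm_eq_inner inner_join)

lemma matrix_vector_mult_join:
  "M *v join x u = join (blk_xx M *v x + blk_xu M *v u) (blk_ux M *v x + blk_uu M *v u)"
  unfolding join_def blk_xx_def blk_xu_def blk_ux_def blk_uu_def
  by (auto simp: vec_eq_iff matrix_vector_mult_def sum_UNIV_Plus split: sum.splits)

lemma inner_transpose_mult: "x \<bullet> (transpose A *v y) = (A *v x) \<bullet> (y::real^_)"
  by (metis dot_lmul_matrix inner_commute transpose_matrix_vector)

lemma inner_vector_matrix_mult: "x \<bullet> (y v* A) = (A *v x) \<bullet> (y::real^_)"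
  by (metis inner_transpose_mult transpose_matrix_vector)

lemma transpose_add: "transpose (X + Y) = transpose X + transpose (Y::real^_^_)"
  by (simp add: transpose_def vec_eq_iff)

lemma transpose_diff: "transpose (X - Y) = transpose X - transpose (Y::real^_^_)"
  by (simp add: transpose_def vec_eq_iff)

lemma qf_add: "qf (X + Y) x = qf X x + qf Y x"
  by (simp add: qf_def matrix_vector_mult_add_rdistrib inner_add_right)

lemma qf_diff: "qf (X - Y) x = qf X x - qf Y x"
  by (simp add: qf_def matrix_vector_mult_diff_rdistrib inner_diff_right)

lemma qf_scaleR: "qf M (c *\<^sub>R x) = c\<^sup>2 * qf M x"
  by (simp only: qf_def matrix_vector_mult_scaleR inner_scaleR_left inner_scaleR_right
      power2_eq_square mult.assoc)

lemma qf_polarization: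
  assumes "transpose M = M"
  shows "qf M (x + y) - qf M (x - y) = 4 * (y \<bullet> (M *v x))"
proof -
  have swap: "x \<bullet> (M *v y) = y \<bullet> (M *v x)"
    using inner_transpose_mult[of x M y] by (simp only: assms inner_commute[of "M *v x" y])
  have "qf M (x + y) = x \<bullet> (M *v x) + x \<bullet> (M *v y) + y \<bullet> (M *v x) + y \<bullet> (M *v y)"
    unfolding qf_def by (simp add: matrix_vector_right_distrib inner_add_left inner_add_right)
  moreover have "qf M (x - y) = x \<bullet> (M *v x) - x \<bullet> (M *v y) - y \<bullet> (M *v x) + y \<bullet> (M *v y)"
    unfolding qf_def by (simp add: matrix_vector_mult_diff_distrib inner_diff_left inner_diff_right)
  ultimately show ?thesis using swap by linarith
qed

lemma qf_join:
  "qf M (join x u) = qf (blk_xx M) x + x \<bullet> (blk_xu M *v u) + u \<bullet> (blk_ux M *v x) + qf (blk_uu M) u"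
  unfolding qf_def matrix_vector_mult_join inner_join by (simp add: inner_add_right)

lemma qf_blk_uu: "qf (blk_uu M) u = qf M (join 0 u)"
  using qf_join[of M 0 u] by (simp add: qf_def)

lemma blk_xu_eq_transpose_blk_ux:
  assumes "transpose M = M"
  shows "blk_xu M = transpose (blk_ux M)"
proof -
  have "M $ i $ j = M $ j $ i" for i j
    using arg_cong[OF assms, of "\<lambda>N. N $ j $ i"] by (simp add: transpose_def)
  then show ?thesis unfolding blk_xu_def blk_ux_def transpose_def by (simp add: vec_eq_iff)
qed

lemma transpose_blk_uu: "transpose M = M \<Longrightarrow> transpose (blk_uu M) = blk_uu M"
  unfolding blk_uu_def transpose_def by (simp add: vec_eq_iff)

lemma transpose_blk_xx: "transpose M = M \<Longrightarrow> transpose (blk_xx M) = blk_xx M"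
  unfolding blk_xx_def transpose_def by (simp add: vec_eq_iff)

lemma qf_join_sym:
  assumes "transpose M = M"
  shows "qf M (join x u) = qf (blk_xx M) x + 2 * (u \<bullet> (blk_ux M *v x)) + qf (blk_uu M) u"
proof -
  have "x \<bullet> (blk_xu M *v u) = u \<bullet> (blk_ux M *v x)"
    using inner_transpose_mult[of x "blk_ux M" u]
    by (simp only: blk_xu_eq_transpose_blk_ux[OF assms] inner_commute[of "blk_ux M *v x" u])
  then show ?thesis unfolding qf_join by linarith
qed

lemma blk_block_mat:
  "blk_xx (block_mat a b c d) = a" "blk_xu (block_mat a b c d) = b"
  "blk_ux (block_mat a b c d) = c" "blk_uu (block_mat a b c d) = d"
  by (simp_all add: blk_xx_def blk_xu_def blk_ux_def blk_uu_def block_mat_def vec_eq_iff)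

lemma transpose_block_mat:
  "transpose (block_mat a b c d) = block_mat (transpose a) (transpose c) (transpose b) (transpose d)"
  by (simp add: block_mat_def transpose_def vec_eq_iff split: sum.splits)

lemma qf_hamQ: "qf (hamQ A B S R P) (join x u) = qf P (A *v x + B *v u) + qf S x + qf R u"
  unfolding qf_join hamQ_def blk_block_mat
  by (simp add: qf_def matrix_vector_mult_add_rdistrib inner_add_right inner_add_left
      matrix_vector_mul_assoc[symmetric] inner_vector_matrix_mult algebra_simps)

lemma transpose_hamQ:
  "\<lbrakk>transpose P = P; transpose S = S; transpose R = R\<rbrakk> \<Longrightarrow> transpose (hamQ A B S R P) = hamQ A B S R P"
  unfolding hamQ_def transpose_block_mat
  by (simp only: transpose_add matrix_transpose_mul matrix_mul_assoc transpose_transpose)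

section \<open>Schur complements as partial minima\<close>

lemma matrix_inv_mult:
  assumes "invertible (X::real^'m^'m)"
  shows "X ** matrix_inv X = mat 1" "matrix_inv X ** X = mat 1"
  using someI_ex[OF assms[unfolded invertible_def]] unfolding matrix_inv_def by auto

lemma transpose_matrix_inv:
  assumes "invertible (X::real^'m^'m)" "transpose X = X"
  shows "transpose (matrix_inv X) = matrix_inv X"
proof -
  have left_inv: "transpose (matrix_inv X) ** X = mat 1"
    using arg_cong[OF matrix_inv_mult(1)[OF assms(1)], of transpose]
    by (simp add: matrix_transpose_mul assms(2))
  have "transpose (matrix_inv X) = transpose (matrix_inv X) ** (X ** matrix_inv X)"
    by (simp add: matrix_inv_mult(1)[OF assms(1)])
  also have "\<dots> = matrix_inv X"
    by (simp only: matrix_mul_assoc left_inv matrix_mul_lid)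
  finally show ?thesis .
qed

lemma invertible_if_qf_pos:
  fixes X :: "real^'m^'m"
  assumes "\<And>u. u \<noteq> 0 \<Longrightarrow> 0 < qf X u"
  shows "invertible X"
proof -
  have "X *v x = 0 \<Longrightarrow> x = 0" for x
    using assms[of x] by (auto simp: qf_def)
  then show ?thesis using invertible_left_inverse matrix_left_invertible_ker by blast
qed

definition schur_argmin :: "real^('n::finite+'m::finite)^('n+'m) \<Rightarrow> real^'n \<Rightarrow> real^'m" where
  "schur_argmin M x = - (matrix_inv (blk_uu M) *v (blk_ux M *v x))"

lemma qf_join_schurH:
  assumes sym: "transpose M = M" and inv: "invertible (blk_uu M)"
  shows "qf M (join x u) = qf (schurH M) x + qf (blk_uu M) (u - schur_argmin M x)"
proof -
  define Mi where "Mi = matrix_inv (blk_uu M)"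
  define w where "w = blk_ux M *v x"
  define v where "v = Mi *v w"
  have Mv: "blk_uu M *v v = w"
    unfolding v_def Mi_def by (simp add: matrix_vector_mul_assoc matrix_inv_mult(1)[OF inv])
  have shift: "u - schur_argmin M x = u + v"
    unfolding schur_argmin_def v_def w_def Mi_def by simp
  have schur: "qf (schurH M) x = qf (blk_xx M) x - w \<bullet> v"
  proof -
    have "(transpose (blk_ux M) ** Mi ** blk_ux M) *v x = transpose (blk_ux M) *v v"
      unfolding v_def w_def by (simp add: matrix_vector_mul_assoc matrix_mul_assoc)
    then have "x \<bullet> ((transpose (blk_ux M) ** Mi ** blk_ux M) *v x) = w \<bullet> v"
      by (simp only: inner_transpose_mult w_def)
    then show ?thesis unfolding schurH_def qf_diff Mi_def[symmetric] by (simp add: qf_def)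
  qed
  have cross: "v \<bullet> (blk_uu M *v u) = w \<bullet> u"
    using inner_transpose_mult[of v "blk_uu M" u] by (simp only: transpose_blk_uu[OF sym] Mv)
  have expand: "qf (blk_uu M) (u + v) = qf (blk_uu M) u + 2 * (u \<bullet> w) + v \<bullet> w"
  proof -
    have "qf (blk_uu M) (u + v)
        = u \<bullet> (blk_uu M *v u) + u \<bullet> (blk_uu M *v v) + v \<bullet> (blk_uu M *v u) + v \<bullet> (blk_uu M *v v)"
      unfolding qf_def by (simp add: matrix_vector_right_distrib inner_add_left inner_add_right)
    also have "\<dots> = qf (blk_uu M) u + u \<bullet> w + w \<bullet> u + v \<bullet> w"
      by (simp only: Mv cross qf_def)
    finally show ?thesis by (simp add: inner_commute)
  qed
  show ?thesis
    unfolding qf_join_sym[OF sym] shift expand schur w_def[symmetric] by (simp add: inner_commute)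
qed

lemma qf_schurH_le:
  assumes "transpose M = M" "invertible (blk_uu M)" "\<And>u. 0 \<le> qf (blk_uu M) u"
  shows "qf (schurH M) x \<le> qf M (join x u)"
  using qf_join_schurH[OF assms(1,2), of x u] assms(3)[of "u - schur_argmin M x"] by linarith

lemma qf_schurH_eq:
  assumes "transpose M = M" "invertible (blk_uu M)"
  shows "qf (schurH M) x = qf M (join x (schur_argmin M x))"
  using qf_join_schurH[OF assms, of x "schur_argmin M x"] by (simp add: qf_def)

lemma transpose_schurH:
  assumes sym: "transpose M = M" and inv: "invertible (blk_uu M)"
  shows "transpose (schurH M) = schurH M"
  unfolding schurH_def
  by (simp add: transpose_diff matrix_transpose_mul transpose_blk_xx[OF sym]
      transpose_matrix_inv[OF inv transpose_blk_uu[OF sym]] matrix_mul_assoc)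

section \<open>Spectral norm and quadratic forms\<close>

lemma spec_norm_nonneg: "0 \<le> spec_norm (M::real^'c^'r)"
  unfolding spec_norm_def by (rule onorm_pos_le) simp

lemma norm_matrix_vector_mult_le: "norm (M *v x) \<le> spec_norm M * norm (x::real^'c)"
  unfolding spec_norm_def by (rule onorm) simp

lemma abs_qf_le_spec_norm: "\<bar>qf M x\<bar> \<le> spec_norm M * (norm x)\<^sup>2"
proof -
  have "\<bar>qf M x\<bar> \<le> norm x * norm (M *v x)"
    unfolding qf_def by (rule Cauchy_Schwarz_ineq2)
  also have "\<dots> \<le> norm x * (spec_norm M * norm x)"
    by (rule mult_left_mono[OF norm_matrix_vector_mult_le]) simp
  finally show ?thesis by (simp add: power2_eq_square mult_ac)
qed

lemma spec_norm_le_if_abs_qf_le: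
  fixes E :: "real^'n^'n"
  assumes sym: "transpose E = E" and bound: "\<And>x. \<bar>qf E x\<bar> \<le> c * (norm x)\<^sup>2"
  shows "spec_norm E \<le> c"
  unfolding spec_norm_def
proof (rule onorm_le)
  fix x :: "real^'n"
  show "norm (E *v x) \<le> c * norm x"
  proof (cases "E *v x = 0")
    case True
    have "0 \<le> c * (norm (axis undefined 1 :: real^'n))\<^sup>2"
      by (rule order_trans[OF abs_ge_zero bound])
    then show ?thesis using True by (simp add: norm_axis_1)
  next
    case False
    then have pos: "0 < norm (E *v x)" and "x \<noteq> 0" by auto
    text \<open>Polarize at \<open>x\<close> and the vector of length \<open>\<parallel>x\<parallel>\<close> pointing along \<open>E x\<close>.\<close>
    define z where "z = (norm x / norm (E *v x)) *\<^sub>R (E *v x)"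
    have norm_z: "norm z = norm x"
      unfolding z_def using pos by simp
    have "z \<bullet> (E *v x) = norm x * norm (E *v x)"
      unfolding z_def using pos by (simp add: power2_norm_eq_inner[symmetric] power2_eq_square)
    then have "4 * (norm x * norm (E *v x)) \<le> \<bar>qf E (x + z)\<bar> + \<bar>qf E (x - z)\<bar>"
      using qf_polarization[OF sym, of x z] by linarith
    also have "\<dots> \<le> c * ((norm (x + z))\<^sup>2 + (norm (x - z))\<^sup>2)"
      using bound[of "x + z"] bound[of "x - z"] by (simp add: distrib_left)
    also have "(norm (x + z))\<^sup>2 + (norm (x - z))\<^sup>2 = 4 * (norm x)\<^sup>2"
    proof -
      have "z \<bullet> z = x \<bullet> x" by (simp only: dot_square_norm norm_z)
      then show ?thesis
        by (simp add: power2_norm_eq_inner inner_add_left inner_add_right inner_diff_left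
            inner_diff_right inner_commute[of z x])
    qed
    finally have "norm x * norm (E *v x) \<le> norm x * (c * norm x)"
      by (simp add: power2_eq_square mult_ac)
    then show ?thesis using \<open>x \<noteq> 0\<close> by simp
  qed
qed

lemma qf_coercive_if_pos:
  fixes M :: "real^'n^'n"
  assumes "\<And>x. x \<noteq> 0 \<Longrightarrow> 0 < qf M x"
  shows "\<exists>c>0. \<forall>x. c * (norm x)\<^sup>2 \<le> qf M x"
proof -
  have cont: "continuous_on (sphere 0 1) (qf M)"
    unfolding qf_def by (intro continuous_intros linear_continuous_on bounded_linear_ident)
  have "sphere (0::real^'n) 1 \<noteq> {}" by (simp add: sphere_eq_empty)
  then obtain x0 where x0: "x0 \<in> sphere 0 1" and min: "\<And>y. y \<in> sphere 0 1 \<Longrightarrow> qf M x0 \<le> qf M y"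
    using continuous_attains_inf[OF compact_sphere _ cont] by blast
  have "qf M x0 * (norm x)\<^sup>2 \<le> qf M x" for x
  proof (cases "x = 0")
    case True then show ?thesis by (simp add: qf_def)
  next
    case False
    define y where "y = (1 / norm x) *\<^sub>R x"
    have "qf M x0 \<le> qf M y" using False by (intro min) (simp add: y_def)
    moreover have "qf M x = (norm x)\<^sup>2 * qf M y"
      unfolding y_def qf_scaleR using False by (simp add: power2_eq_square field_simps)
    ultimately show ?thesis using False by (simp add: mult.commute mult_left_mono)
  qed
  moreover have "0 < qf M x0" using x0 by (intro assms) auto
  ultimately show ?thesis by blast
qed

lemma class_K_linear: "0 < c \<Longrightarrow> class_K (\<lambda>r. c * r)"
  unfolding class_K_def strict_mono_on_def by (auto intro!: continuous_intros)

lemma class_KL_scaled_decay: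
  assumes C: "0 < C" and q: "0 < q" "q < 1" and D: "0 \<le> D"
  shows "class_KL (\<lambda>r i. r * (C * q^i + D * inverse (real (Suc i))))"
proof -
  define h where "h i = C * q^i + D * inverse (real (Suc i))" for i
  have h_pos: "0 < h i" for i
    unfolding h_def using C q D by (simp add: add_pos_nonneg)
  have h_anti: "antimono h"
  proof (rule antimonoI)
    fix i j :: nat assume "i \<le> j"
    then have "q^j \<le> q^i" and "inverse (real (Suc j)) \<le> inverse (real (Suc i))"
      using q by (simp_all add: power_decreasing le_imp_inverse_le)
    then show "h j \<le> h i" unfolding h_def using C D by (simp add: add_mono mult_left_mono)
  qed
  have "(\<lambda>i. q^i) \<longlonglongrightarrow> 0" using q by (intro LIMSEQ_power_zero) simp
  then have "h \<longlonglongrightarrow> 0"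
    unfolding h_def using LIMSEQ_inverse_real_of_nat
    by (auto intro!: tendsto_add_zero tendsto_mult_right_zero)
  then show ?thesis
    unfolding h_def[symmetric] class_KL_def
  proof (intro conjI allI impI)
    fix i
    show "class_K (\<lambda>r. r * h i)"
      using class_K_linear[OF h_pos[of i]] by (simp add: mult.commute)
  next
    fix r :: real
    assume "0 \<le> r"
    then show "antimono (\<lambda>i. r * h i)"
      using h_anti by (auto simp: antimono_def intro: mult_left_mono)
    show "(\<lambda>i. r * h i) \<longlonglongrightarrow> 0"
      using tendsto_mult_right_zero[OF \<open>h \<longlonglongrightarrow> 0\<close>, of r] by simp
  qed
qed

locale riccati_setting =
  fixes A :: "real^'n::finite^'n" and B :: "real^'m::finite^'n"
    and S :: "real^'n^'n" and R :: "real^'m^'m" and Pstar P0 :: "real^'n^'n"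
    and lam lamP p :: real
  assumes sym_S: "transpose S = S" and sym_R: "transpose R = R"
    and sym_Pstar: "transpose Pstar = Pstar" and sym_P0: "transpose P0 = P0"
    and lam_pos: "0 < lam"
    and S_lower: "\<And>x. lam * (norm x)\<^sup>2 \<le> qf S x" and R_lower: "\<And>u. lam * (norm u)\<^sup>2 \<le> qf R u"
    and lamP_pos: "0 < lamP" and Pstar_lower: "\<And>x. lamP * (norm x)\<^sup>2 \<le> qf Pstar x"
    and Pstar_upper: "\<And>x. qf Pstar x \<le> p * (norm x)\<^sup>2" and lam_le_p: "lam \<le> p"
    and Pstar_fixpoint: "Pstar = schurH (hamQ A B S R Pstar)"
    and P0_nonneg: "\<And>x. 0 \<le> qf P0 x"
begin

abbreviation Mstar :: "real^('n+'m)^('n+'m)" where "Mstar \<equiv> hamQ A B S R Pstar"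

definition r0 :: real where "r0 = spec_norm (P0 - Pstar)"
definition rho :: real where "rho = 1 - lam / p"
definition rate :: real where "rate = max rho (1/2)"
definition U :: real where "U = (1 + r0 / lamP + p / lam) * p"
definition D :: real where "D = (if r0 = 0 then 0 else max 1 (4 * p * U / (lam * r0)))"
definition gain :: real where "gain = p\<^sup>2 / lam\<^sup>2 + 2 * U / lam"
definition kl_bound :: "real \<Rightarrow> nat \<Rightarrow> real" where
  "kl_bound r i = r * ((p / lamP) * rate ^ i + D * inverse (real (Suc i)))"

lemma p_pos: "0 < p"
  using lam_pos lam_le_p by simp

lemma rho_nonneg: "0 \<le> rho" and rho_le_rate: "rho \<le> rate"
  and rate_pos: "0 < rate" and rate_less_1: "rate < 1"
  using lam_le_p p_pos lam_pos by (auto simp: rho_def rate_def)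

lemma r0_nonneg: "0 \<le> r0"
  unfolding r0_def by (rule spec_norm_nonneg)

lemma abs_qf_P0_diff_le: "\<bar>qf (P0 - Pstar) x\<bar> \<le> r0 * (norm x)\<^sup>2"
  unfolding r0_def by (rule abs_qf_le_spec_norm)

lemma U_pos: "0 < U"
  unfolding U_def using r0_nonneg lamP_pos p_pos lam_pos by (simp add: add_pos_nonneg)

lemma D_nonneg: "0 \<le> D"
  unfolding D_def by (auto simp: le_max_iff_disj)

lemma gain_pos: "0 < gain"
  unfolding gain_def using U_pos lam_pos by (simp add: add_nonneg_pos)

lemma class_KL_kl_bound: "class_KL kl_bound"
  unfolding kl_bound_def[abs_def]
  using p_pos lamP_pos rate_pos rate_less_1 D_nonneg by (intro class_KL_scaled_decay) auto

lemma averaged_rate_le_kl: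
  assumes "0 < i" and "0 < r0"
  shows "(p / i) * (2 * U / lam) \<le> r0 * (D * inverse (real (Suc i)))"
proof -
  have "(p / i) * (2 * U / lam) = (2 * p * U / lam) * (1 / real i)"
    by (simp add: ac_simps)
  also have "\<dots> \<le> (2 * p * U / lam) * (2 / real (Suc i))"
    using assms(1) p_pos U_pos lam_pos by (intro mult_left_mono) (simp_all add: field_simps)
  also have "\<dots> = r0 * (4 * p * U / (lam * r0)) * inverse (real (Suc i))"
    using assms(2) by (simp add: field_simps)
  also have "\<dots> \<le> r0 * (D * inverse (real (Suc i)))"
  proof -
    have "4 * p * U / (lam * r0) * inverse (real (Suc i)) \<le> D * inverse (real (Suc i))"
      unfolding D_def using assms(2) by (intro mult_right_mono) simp_all
    then have "r0 * (4 * p * U / (lam * r0) * inverse (real (Suc i))) \<le> r0 * (D * inverse (real (Suc i)))"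
      by (rule mult_left_mono[OF _ r0_nonneg])
    then show ?thesis by (simp only: mult.assoc)
  qed
  finally show ?thesis .
qed

lemma Pstar_nonneg: "0 \<le> qf Pstar x"
  using Pstar_lower[of x] lamP_pos by (smt (verit) zero_le_power2 mult_nonneg_nonneg)

lemma Mstar_sym: "transpose Mstar = Mstar"
  by (rule transpose_hamQ[OF sym_Pstar sym_S sym_R])

lemma qf_blk_uu_Mstar_lower: "lam * (norm u)\<^sup>2 \<le> qf (blk_uu Mstar) u"
  unfolding qf_blk_uu qf_hamQ using Pstar_nonneg[of "B *v u"] R_lower[of u] by (simp add: qf_def)

lemma Mstar_invertible: "invertible (blk_uu Mstar)"
  using qf_blk_uu_Mstar_lower lam_pos
  by (intro invertible_if_qf_pos) (smt (verit) norm_eq_zero zero_less_power2 mult_pos_pos)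

lemma qf_Pstar_le: "qf Pstar x \<le> qf Pstar (A *v x + B *v u) + qf S x + qf R u"
proof -
  have "0 \<le> qf (blk_uu Mstar) u" for u
    using qf_blk_uu_Mstar_lower[of u] lam_pos by (smt (verit) zero_le_power2 mult_nonneg_nonneg)
  then show ?thesis
    using qf_schurH_le[OF Mstar_sym Mstar_invertible, of x u] Pstar_fixpoint qf_hamQ by metis
qed

lemma qf_Pstar_eq:
  "qf Pstar x = qf Pstar (A *v x + B *v schur_argmin Mstar x) + qf S x + qf R (schur_argmin Mstar x)"
  using qf_schurH_eq[OF Mstar_sym Mstar_invertible, of x] Pstar_fixpoint qf_hamQ by metis

lemma qf_Pstar_closed_loop_le:
  "qf Pstar (A *v x + B *v schur_argmin Mstar x) \<le> rho * qf Pstar x"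
proof -
  have "(lam / p) * qf Pstar x \<le> lam * (norm x)\<^sup>2"
    using mult_left_mono[OF Pstar_upper[of x], of "lam / p"] lam_pos p_pos by simp
  moreover have "0 \<le> qf R (schur_argmin Mstar x)"
    using R_lower[of "schur_argmin Mstar x"] lam_pos by (smt (verit) zero_le_power2 mult_nonneg_nonneg)
  ultimately show ?thesis
    using qf_Pstar_eq[of x] S_lower[of x] by (simp add: rho_def left_diff_distrib)
qed

lemma stage_cost_le_qf_Pstar:
  "lam * ((norm x)\<^sup>2 + (norm (schur_argmin Mstar x))\<^sup>2) \<le> qf Pstar x"
  using qf_Pstar_eq[of x] S_lower[of x] R_lower[of "schur_argmin Mstar x"]
    Pstar_nonneg[of "A *v x + B *v schur_argmin Mstar x"]
  by (simp add: distrib_left)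

end

section \<open>Value-function bounds for the perturbed iteration\<close>

locale perturbed_riccati = riccati_setting A B S R Pstar P0 lam lamP p
  for A :: "real^'n::finite^'n" and B :: "real^'m::finite^'n" and S R Pstar P0 lam lamP p +
  fixes dQ :: "nat \<Rightarrow> real^('n::finite+'m::finite)^('n+'m)" and d :: real
  assumes sym_dQ: "\<And>i. transpose (dQ i) = dQ i"
    and d_nonneg: "0 \<le> d" and d_small: "2 * d \<le> lam"
    and abs_qf_dQ_le: "\<And>i z. \<bar>qf (dQ i) z\<bar> \<le> d * (norm z)\<^sup>2"
begin

abbreviation P :: "nat \<Rightarrow> real^'n^'n" where "P i \<equiv> riccati_iter A B S R P0 dQ i"
abbreviation M :: "nat \<Rightarrow> real^('n+'m)^('n+'m)" where "M i \<equiv> hamQ A B S R (P i) + dQ i"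

lemma abs_qf_dQ_join_le: "\<bar>qf (dQ i) (join x u)\<bar> \<le> d * ((norm x)\<^sup>2 + (norm u)\<^sup>2)"
  using abs_qf_dQ_le[of i "join x u"] by (simp only: norm_join_power2)

lemma perturbed_stage_cost_lower:
  "(lam / 2) * ((norm x)\<^sup>2 + (norm u)\<^sup>2) \<le> qf S x + qf R u + qf (dQ i) (join x u)"
proof -
  have "d * ((norm x)\<^sup>2 + (norm u)\<^sup>2) \<le> (lam / 2) * ((norm x)\<^sup>2 + (norm u)\<^sup>2)"
    using d_small by (intro mult_right_mono) auto
  then show ?thesis
    using abs_qf_dQ_join_le[of i x u] S_lower[of x] R_lower[of u] by (simp add: algebra_simps)
qed

lemma perturbed_hamQ_lower:
  assumes "\<And>y. 0 \<le> qf Q y"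
  shows "(lam / 2) * ((norm x)\<^sup>2 + (norm u)\<^sup>2) \<le> qf (hamQ A B S R Q + dQ i) (join x u)"
  unfolding qf_add qf_hamQ
  using perturbed_stage_cost_lower[of x u i] assms[of "A *v x + B *v u"] by linarith

lemma perturbed_hamQ_uu_pos:
  assumes "\<And>y. 0 \<le> qf Q y" and "u \<noteq> 0"
  shows "0 < qf (blk_uu (hamQ A B S R Q + dQ i)) u"
proof -
  have "0 < (lam / 2) * ((norm (0::real^'n))\<^sup>2 + (norm u)\<^sup>2)"
    using lam_pos assms(2) by simp
  then show ?thesis
    unfolding qf_blk_uu using perturbed_hamQ_lower[OF assms(1), of 0 u i] by linarith
qed

lemma P_sym_nonneg: "transpose (P i) = P i \<and> (\<forall>x. 0 \<le> qf (P i) x)"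
proof (induction i)
  case 0
  then show ?case using sym_P0 P0_nonneg by simp
next
  case (Suc i)
  then have nonneg: "\<And>y. 0 \<le> qf (P i) y" by blast
  have sym: "transpose (M i) = M i"
    using Suc sym_S sym_R sym_dQ by (simp add: transpose_add transpose_hamQ)
  have inv: "invertible (blk_uu (M i))"
    by (intro invertible_if_qf_pos perturbed_hamQ_uu_pos[OF nonneg])
  have "0 \<le> qf (P (Suc i)) x" for x
  proof -
    have "0 \<le> (lam / 2) * ((norm x)\<^sup>2 + (norm (schur_argmin (M i) x))\<^sup>2)"
      using lam_pos by simp
    also have "\<dots> \<le> qf (P (Suc i)) x"
      using perturbed_hamQ_lower[OF nonneg] by (simp add: qf_schurH_eq[OF sym inv])
    finally show ?thesis .
  qed
  then show ?case by (simp add: transpose_schurH[OF sym inv])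
qed

lemma P_sym: "transpose (P i) = P i"
  using P_sym_nonneg by blast

lemma P_nonneg: "0 \<le> qf (P i) x"
  using P_sym_nonneg by blast

lemma M_sym: "transpose (M i) = M i"
  using P_sym sym_S sym_R sym_dQ by (simp add: transpose_add transpose_hamQ)

lemma M_uu_pos: "u \<noteq> 0 \<Longrightarrow> 0 < qf (blk_uu (M i)) u"
  by (rule perturbed_hamQ_uu_pos[OF P_nonneg])

lemma M_invertible: "invertible (blk_uu (M i))"
  by (intro invertible_if_qf_pos M_uu_pos)

lemma qf_P_Suc_le: "qf (P (Suc i)) x \<le> qf (M i) (join x u)"
proof -
  have "0 \<le> qf (blk_uu (M i)) u" for u
    using M_uu_pos[of u i] by (cases "u = 0") (auto simp: qf_def)
  then show ?thesis using qf_schurH_le[OF M_sym M_invertible] by simp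
qed

lemma qf_P_Suc_eq: "qf (P (Suc i)) x = qf (M i) (join x (schur_argmin (M i) x))"
  using qf_schurH_eq[OF M_sym M_invertible] by simp

lemma qf_M: "qf (M i) (join x u) = qf (P i) (A *v x + B *v u) + qf S x + qf R u + qf (dQ i) (join x u)"
  by (simp add: qf_add qf_hamQ)

lemma value_upper:
  "qf (P i) x - qf Pstar x \<le> ((r0 / lamP) * rho ^ i + (p / lam\<^sup>2) * d) * qf Pstar x"
proof (induction i arbitrary: x)
  case 0
  have "qf P0 x - qf Pstar x \<le> (r0 / lamP) * (lamP * (norm x)\<^sup>2)"
    using abs_qf_P0_diff_le[of x] lamP_pos unfolding qf_diff by simp
  also have "\<dots> \<le> (r0 / lamP) * qf Pstar x"
    using r0_nonneg lamP_pos by (intro mult_left_mono Pstar_lower) simp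
  moreover have "0 \<le> (p / lam\<^sup>2) * d * qf Pstar x"
    using Pstar_nonneg[of x] d_nonneg p_pos by simp
  ultimately show ?case by (simp add: distrib_right)
next
  case (Suc i)
  define u where "u = schur_argmin Mstar x"
  define y where "y = A *v x + B *v u"
  define a where "a = (r0 / lamP) * rho ^ i + (p / lam\<^sup>2) * d"
  have a_nonneg: "0 \<le> a"
    unfolding a_def using rho_nonneg r0_nonneg lamP_pos d_nonneg p_pos by simp
  have "qf (P (Suc i)) x - qf Pstar x \<le> (qf (P i) y - qf Pstar y) + qf (dQ i) (join x u)"
    using qf_P_Suc_le[of i x u] qf_Pstar_eq[of x] unfolding qf_M y_def u_def by linarith
  also have "\<dots> \<le> a * (rho * qf Pstar x) + (d / lam) * qf Pstar x"
  proof -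
    have "a * qf Pstar y \<le> a * (rho * qf Pstar x)"
      using qf_Pstar_closed_loop_le[of x] a_nonneg unfolding y_def u_def by (rule mult_left_mono)
    moreover have "d * ((norm x)\<^sup>2 + (norm u)\<^sup>2) \<le> (d / lam) * qf Pstar x"
      using mult_left_mono[OF stage_cost_le_qf_Pstar[of x], of "d / lam"] d_nonneg lam_pos
      unfolding u_def by simp
    ultimately show ?thesis
      using Suc.IH[of y] abs_qf_dQ_join_le[of i x u] unfolding a_def by linarith
  qed
  also have "\<dots> = (a * rho + d / lam) * qf Pstar x"
    by (simp only: distrib_right mult.assoc)
  also have "a * rho + d / lam = (r0 / lamP) * rho ^ Suc i + (p / lam\<^sup>2) * d"
  proof -
    have "(p / lam\<^sup>2) * d * rho + d / lam = (p / lam\<^sup>2) * d"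
      unfolding rho_def using p_pos lam_pos by (simp add: field_simps power2_eq_square)
    moreover have "a * rho + d / lam = (r0 / lamP) * (rho ^ i * rho) + ((p / lam\<^sup>2) * d * rho + d / lam)"
      unfolding a_def by (simp add: algebra_simps)
    ultimately show ?thesis by (simp add: power_Suc2)
  qed
  finally show ?case .
qed

lemma qf_P_le_U: "qf (P i) x \<le> U * (norm x)\<^sup>2"
proof -
  define a where "a = (r0 / lamP) * rho ^ i + (p / lam\<^sup>2) * d"
  have "(r0 / lamP) * rho ^ i \<le> r0 / lamP"
    using rho_nonneg rho_le_rate rate_less_1 r0_nonneg lamP_pos
    by (intro mult_left_le) (simp_all add: power_le_one)
  moreover have "(p / lam\<^sup>2) * d \<le> (p / lam\<^sup>2) * lam"
    using d_small d_nonneg p_pos by (intro mult_left_mono) auto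
  moreover have "(p / lam\<^sup>2) * lam = p / lam"
    using lam_pos by (simp add: power2_eq_square)
  ultimately have "a \<le> r0 / lamP + p / lam"
    unfolding a_def by linarith
  moreover have "0 \<le> a"
    unfolding a_def using rho_nonneg r0_nonneg lamP_pos d_nonneg p_pos by simp
  ultimately have "(1 + a) * qf Pstar x \<le> (1 + r0 / lamP + p / lam) * (p * (norm x)\<^sup>2)"
    using Pstar_upper[of x] Pstar_nonneg[of x] by (intro mult_mono) auto
  then show ?thesis
    using value_upper[of i x] unfolding a_def U_def by (simp add: algebra_simps)
qed

text \<open>
  The closed loop of the \<open>i\<close>-step problem defining \<open>P\<^sub>i\<close>, started at \<open>x\<close>: at time \<open>k\<close> it applies
  the minimizing input of the stage that produced \<open>P\<^sub>i\<^sub>-\<^sub>k\<close>.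
\<close>

primrec traj :: "nat \<Rightarrow> real^'n \<Rightarrow> nat \<Rightarrow> real^'n" where
  "traj i x 0 = x"
| "traj i x (Suc k) = A *v traj i x k + B *v schur_argmin (M (i - Suc k)) (traj i x k)"

definition traj_input :: "nat \<Rightarrow> real^'n \<Rightarrow> nat \<Rightarrow> real^'m" where
  "traj_input i x k = schur_argmin (M (i - Suc k)) (traj i x k)"

definition traj_energy :: "nat \<Rightarrow> real^'n \<Rightarrow> nat \<Rightarrow> real" where
  "traj_energy i x k = (norm (traj i x k))\<^sup>2 + (norm (traj_input i x k))\<^sup>2"

lemma traj_Suc_input: "traj i x (Suc k) = A *v traj i x k + B *v traj_input i x k"
  unfolding traj_input_def by simp

lemma traj_energy_nonneg: "0 \<le> traj_energy i x k"
  unfolding traj_energy_def by simp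

lemma qf_P_along_traj:
  assumes "k < i"
  shows "qf (P (i - k)) (traj i x k) = qf (P (i - Suc k)) (traj i x (Suc k))
           + (qf S (traj i x k) + qf R (traj_input i x k)
              + qf (dQ (i - Suc k)) (join (traj i x k) (traj_input i x k)))"
proof -
  have i: "i - k = Suc (i - Suc k)" using assms by simp
  show ?thesis unfolding i qf_P_Suc_eq qf_M traj_Suc_input traj_input_def by simp
qed

lemma value_ge_traj_energy:
  assumes "j \<le> i"
  shows "qf (P (i - j)) (traj i x j) + (lam / 2) * (\<Sum>k<j. traj_energy i x k) \<le> qf (P i) x"
  using assms
proof (induction j)
  case 0
  then show ?case by simp
next
  case (Suc j)
  have "(lam / 2) * traj_energy i x j
      \<le> qf S (traj i x j) + qf R (traj_input i x j)
        + qf (dQ (i - Suc j)) (join (traj i x j) (traj_input i x j))"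
    unfolding traj_energy_def by (rule perturbed_stage_cost_lower)
  then show ?case
    using Suc qf_P_along_traj[of j i x] by (simp add: distrib_left)
qed

text \<open>Along the trajectory \<open>P\<^sup>*\<close> pays at most the unperturbed stage costs, \<open>P\<^sub>i\<close> exactly the perturbed ones.\<close>

lemma value_gap_along_traj:
  assumes "j \<le> i"
  shows "qf Pstar x - qf (P i) x
    \<le> (qf Pstar (traj i x j) - qf (P (i - j)) (traj i x j)) + d * (\<Sum>k<j. traj_energy i x k)"
  using assms
proof (induction j)
  case 0
  then show ?case by simp
next
  case (Suc j)
  have "qf Pstar (traj i x j)
      \<le> qf Pstar (traj i x (Suc j)) + qf S (traj i x j) + qf R (traj_input i x j)"
    unfolding traj_Suc_input by (rule qf_Pstar_le)
  moreover have "- qf (dQ (i - Suc j)) (join (traj i x j) (traj_input i x j)) \<le> d * traj_energy i x j"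
    using abs_qf_dQ_join_le unfolding traj_energy_def by (smt (verit))
  ultimately show ?case
    using Suc qf_P_along_traj[of j i x] by (simp add: distrib_left)
qed

lemma traj_energy_sum_le: "(\<Sum>k<i. traj_energy i x k) \<le> (2 * U / lam) * (norm x)\<^sup>2"
proof -
  have "(lam / 2) * (\<Sum>k<i. traj_energy i x k) \<le> U * (norm x)\<^sup>2"
    using value_ge_traj_energy[of i i x] P_nonneg[of 0 "traj i x i"] qf_P_le_U[of i x] by simp
  then show ?thesis using lam_pos by (simp add: field_simps)
qed

lemma value_lower_terminal:
  "qf Pstar x - qf (P i) x \<le> r0 * (norm (traj i x i))\<^sup>2 + d * ((2 * U / lam) * (norm x)\<^sup>2)"
proof -
  have "qf Pstar (traj i x i) - qf P0 (traj i x i) \<le> r0 * (norm (traj i x i))\<^sup>2"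
    using abs_qf_P0_diff_le[of "traj i x i"] unfolding qf_diff by linarith
  moreover have "d * (\<Sum>k<i. traj_energy i x k) \<le> d * ((2 * U / lam) * (norm x)\<^sup>2)"
    by (rule mult_left_mono[OF traj_energy_sum_le d_nonneg])
  ultimately show ?thesis
    using value_gap_along_traj[of i i x] by simp
qed

lemma value_lower_averaged:
  assumes "0 < i"
  shows "qf Pstar x - qf (P i) x \<le> (p / i + d) * ((2 * U / lam) * (norm x)\<^sup>2)"
proof -
  define W where "W = (\<Sum>k<i. traj_energy i x k)"
  define g where "g = qf Pstar x - qf (P i) x"
  have W_nonneg: "0 \<le> W"
    unfolding W_def by (intro sum_nonneg traj_energy_nonneg)
  have g_le: "g \<le> p * traj_energy i x j + d * W" if "j < i" for j
  proof -
    have "qf Pstar (traj i x j) \<le> p * traj_energy i x j"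
      using Pstar_upper[of "traj i x j"] mult_left_mono[of _ _ p] p_pos
      unfolding traj_energy_def by (smt (verit) zero_le_power2)
    moreover have "(\<Sum>k<j. traj_energy i x k) \<le> W"
      unfolding W_def using that by (intro sum_mono2) (auto intro: traj_energy_nonneg)
    then have "d * (\<Sum>k<j. traj_energy i x k) \<le> d * W"
      by (rule mult_left_mono[OF _ d_nonneg])
    moreover have "g \<le> (qf Pstar (traj i x j) - qf (P (i - j)) (traj i x j)) + d * (\<Sum>k<j. traj_energy i x k)"
      unfolding g_def using value_gap_along_traj[of j i x] that by simp
    ultimately show ?thesis
      using P_nonneg[of "i - j" "traj i x j"] by linarith
  qed
  have "real i * g \<le> p * W + real i * (d * W)"
    using sum_mono[of "{..<i}" "\<lambda>_. g" "\<lambda>j. p * traj_energy i x j + d * W"] g_le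
    by (simp add: sum.distrib sum_distrib_left[symmetric] W_def)
  then have "g \<le> (p / i + d) * W"
    using assms by (simp add: field_simps)
  also have "\<dots> \<le> (p / i + d) * ((2 * U / lam) * (norm x)\<^sup>2)"
    using traj_energy_sum_le[of i x] p_pos d_nonneg unfolding W_def
    by (intro mult_left_mono) simp_all
  finally show ?thesis unfolding g_def .
qed

text \<open>
  When \<open>r0 > 0\<close>, the constant \<open>D\<close> (which contains \<open>1 / r0\<close>) lets the \<open>O(1/i)\<close> decay of the
  averaged bound be absorbed into \<open>kl_bound r0 i\<close>.
\<close>

lemma value_lower:
  "qf Pstar x - qf (P i) x \<le> (r0 * (D * inverse (real (Suc i))) + (2 * U / lam) * d) * (norm x)\<^sup>2"
proof (cases "r0 = 0")
  case True
  then show ?thesis using value_lower_terminal[of x i] by (simp add: D_def algebra_simps)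
next
  case False
  then have r0_pos: "0 < r0" using r0_nonneg by simp
  show ?thesis
  proof (cases "i = 0")
    case True
    have "r0 * (norm x)\<^sup>2 \<le> (r0 * D) * (norm x)\<^sup>2"
      unfolding D_def using r0_pos by (intro mult_right_mono) simp_all
    then show ?thesis using value_lower_terminal[of x 0] True by (simp add: algebra_simps)
  next
    case False
    then have "(p / i) * (2 * U / lam) * (norm x)\<^sup>2 \<le> r0 * (D * inverse (real (Suc i))) * (norm x)\<^sup>2"
      using averaged_rate_le_kl r0_pos by (intro mult_right_mono) simp_all
    moreover have "(p / i + d) * ((2 * U / lam) * (norm x)\<^sup>2)
        = (p / i) * (2 * U / lam) * (norm x)\<^sup>2 + (2 * U / lam) * d * (norm x)\<^sup>2"
      using False lam_pos by (simp add: field_simps)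
    moreover have "(r0 * (D * inverse (real (Suc i))) + (2 * U / lam) * d) * (norm x)\<^sup>2
        = r0 * (D * inverse (real (Suc i))) * (norm x)\<^sup>2 + (2 * U / lam) * d * (norm x)\<^sup>2"
      by (rule distrib_right)
    ultimately show ?thesis using value_lower_averaged[of i x] False by linarith
  qed
qed

lemma abs_qf_deviation_le: "\<bar>qf (P i - Pstar) x\<bar> \<le> (kl_bound r0 i + gain * d) * (norm x)\<^sup>2"
proof -
  define a where "a = (r0 / lamP) * rho ^ i + (p / lam\<^sup>2) * d"
  have a_nonneg: "0 \<le> a"
    unfolding a_def using rho_nonneg r0_nonneg lamP_pos d_nonneg p_pos by simp
  have kl_lower: "r0 * (D * inverse (real (Suc i))) \<le> kl_bound r0 i"
    and kl_upper: "(r0 / lamP) * rho ^ i * p \<le> kl_bound r0 i"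
  proof -
    have "0 \<le> r0 * ((p / lamP) * rate ^ i)" and "0 \<le> r0 * (D * inverse (real (Suc i)))"
      using r0_nonneg p_pos lamP_pos rate_pos D_nonneg by simp_all
    moreover have "(r0 / lamP) * rho ^ i * p \<le> r0 * ((p / lamP) * rate ^ i)"
    proof -
      have "r0 * p * rho ^ i \<le> r0 * p * rate ^ i"
        using power_mono[OF rho_le_rate rho_nonneg, of i] r0_nonneg p_pos by (simp add: mult_left_mono)
      then show ?thesis using lamP_pos by (simp add: field_simps)
    qed
    ultimately show "r0 * (D * inverse (real (Suc i))) \<le> kl_bound r0 i"
      and "(r0 / lamP) * rho ^ i * p \<le> kl_bound r0 i"
      unfolding kl_bound_def by (simp_all add: distrib_left)
  qed
  have gain_split: "gain * d = (p / lam\<^sup>2) * d * p + (2 * U / lam) * d"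
    unfolding gain_def by (simp add: algebra_simps power2_eq_square)
  have "0 \<le> (2 * U / lam) * d"
    using U_pos lam_pos d_nonneg by simp
  moreover have "a * p = (r0 / lamP) * rho ^ i * p + (p / lam\<^sup>2) * d * p"
    unfolding a_def by (rule distrib_right)
  ultimately have ap_le: "a * p \<le> kl_bound r0 i + gain * d"
    using kl_upper unfolding gain_split by linarith
  have "qf (P i - Pstar) x \<le> a * qf Pstar x"
    using value_upper[of i x] unfolding qf_diff a_def .
  also have "\<dots> \<le> (a * p) * (norm x)\<^sup>2"
    using mult_left_mono[OF Pstar_upper[of x] a_nonneg] by (simp add: mult.assoc)
  also have "\<dots> \<le> (kl_bound r0 i + gain * d) * (norm x)\<^sup>2"
    using ap_le by (rule mult_right_mono) simp
  moreover have "- qf (P i - Pstar) x \<le> (kl_bound r0 i + gain * d) * (norm x)\<^sup>2"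
  proof -
    have "0 \<le> (p / lam\<^sup>2) * d * p"
      using p_pos d_nonneg by simp
    then have "r0 * (D * inverse (real (Suc i))) + (2 * U / lam) * d \<le> kl_bound r0 i + gain * d"
      using kl_lower unfolding gain_split by linarith
    then show ?thesis
      using value_lower[of x i] mult_right_mono[of _ _ "(norm x)\<^sup>2"] unfolding qf_diff
      by (smt (verit) zero_le_power2)
  qed
  ultimately show ?thesis by (simp add: abs_le_iff)
qed

lemma spec_norm_deviation_le: "spec_norm (P i - Pstar) \<le> kl_bound r0 i + gain * d"
  using abs_qf_deviation_le
  by (intro spec_norm_le_if_abs_qf_le) (simp_all add: transpose_diff P_sym sym_Pstar)

end

context riccati_setting
begin

lemma perturbed_iteration_bound:
  fixes dQ :: "nat \<Rightarrow> real^('n+'m)^('n+'m)"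
  assumes sym: "\<forall>i. sym_mat (dQ i)" and bdd: "bdd_above (range (\<lambda>i. spec_norm (dQ i)))"
    and small: "(SUP i. spec_norm (dQ i)) < lam / 2"
  shows "invertible (blk_uu (hamQ A B S R (riccati_iter A B S R P0 dQ i) + dQ i))"
    and "spec_norm (riccati_iter A B S R P0 dQ i - Pstar)
           \<le> kl_bound r0 i + gain * (SUP i. spec_norm (dQ i))"
proof -
  define d where "d = (SUP i. spec_norm (dQ i))"
  have dQ_le: "spec_norm (dQ i) \<le> d" for i
    unfolding d_def using bdd by (intro cSUP_upper) simp_all
  interpret perturbed_riccati A B S R Pstar P0 lam lamP p dQ d
  proof (intro perturbed_riccati.intro riccati_setting_axioms perturbed_riccati_axioms.intro)
    show "transpose (dQ i) = dQ i" for i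
      using sym unfolding sym_mat_def by blast
    show "0 \<le> d"
      using dQ_le[of 0] spec_norm_nonneg[of "dQ 0"] by linarith
    show "2 * d \<le> lam"
      using small unfolding d_def by simp
    show "\<bar>qf (dQ i) z\<bar> \<le> d * (norm z)\<^sup>2" for i z
      using abs_qf_le_spec_norm[of "dQ i" z] mult_right_mono[OF dQ_le[of i], of "(norm z)\<^sup>2"]
      by simp
  qed
  show "invertible (blk_uu (hamQ A B S R (riccati_iter A B S R P0 dQ i) + dQ i))"
    by (rule M_invertible)
  show "spec_norm (riccati_iter A B S R P0 dQ i - Pstar)
          \<le> kl_bound r0 i + gain * (SUP i. spec_norm (dQ i))"
    using spec_norm_deviation_le unfolding d_def .
qed

end

lemma pd_mat_iff_qf: "pd_mat M \<longleftrightarrow> transpose M = M \<and> (\<forall>x. x \<noteq> 0 \<longrightarrow> 0 < qf M x)"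
  unfolding pd_mat_def sym_mat_def qf_def ..

lemma psd_mat_iff_qf: "psd_mat M \<longleftrightarrow> transpose M = M \<and> (\<forall>x. 0 \<le> qf M x)"
  unfolding psd_mat_def sym_mat_def qf_def ..

lemma riccati_setting_if_pd:
  assumes S: "pd_mat S" and R: "pd_mat R" and Pstar: "pd_mat Pstar"
    and fixpoint: "Pstar = schurH (hamQ A B S R Pstar)" and P0: "psd_mat P0"
  obtains lam lamP p where "riccati_setting A B S R Pstar P0 lam lamP p"
proof -
  obtain cS where cS: "0 < cS" "\<And>x. cS * (norm x)\<^sup>2 \<le> qf S x"
    using S qf_coercive_if_pos unfolding pd_mat_iff_qf by blast
  obtain cR where cR: "0 < cR" "\<And>u. cR * (norm u)\<^sup>2 \<le> qf R u"
    using R qf_coercive_if_pos unfolding pd_mat_iff_qf by blast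
  obtain lamP where lamP: "0 < lamP" "\<And>x. lamP * (norm x)\<^sup>2 \<le> qf Pstar x"
    using Pstar qf_coercive_if_pos unfolding pd_mat_iff_qf by blast
  define lam where "lam = min cS cR"
  have lam_le: "lam * (norm x)\<^sup>2 \<le> c * (norm x)\<^sup>2" if "c = cS \<or> c = cR" for c and x :: "real^'k"
    using that unfolding lam_def by (intro mult_right_mono) auto
  have "riccati_setting A B S R Pstar P0 lam lamP (max lam (spec_norm Pstar))"
  proof
    show "lam * (norm x)\<^sup>2 \<le> qf S x" for x
      using lam_le[of cS x] cS(2)[of x] by simp
    show "lam * (norm u)\<^sup>2 \<le> qf R u" for u
      using lam_le[of cR u] cR(2)[of u] by simp
    show "qf Pstar x \<le> max lam (spec_norm Pstar) * (norm x)\<^sup>2" for x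
      using abs_qf_le_spec_norm[of Pstar x] mult_right_mono[of "spec_norm Pstar" "max lam (spec_norm Pstar)" "(norm x)\<^sup>2"]
      by simp
  qed (use S R Pstar P0 fixpoint lamP cS cR in \<open>auto simp: lam_def pd_mat_iff_qf psd_mat_iff_qf\<close>)
  then show ?thesis by (rule that)
qed

text \<open>
  Stabilizability of \<open>(A, B)\<close> is what guarantees the existence of \<open>P\<^sup>*\<close> in the first place; since
  \<open>P\<^sup>*\<close> is given, the estimate itself does not use it.
\<close>

theorem proposition4:
  fixes A :: "real^'n^'n" and B :: "real^'m^'n" and S :: "real^'n^'n" and R :: "real^'m^'m"
    and Pstar :: "real^'n^'n" and P0 :: "real^'n^'n"
  assumes "pd_mat S" and "pd_mat R" and "stabilizable A B"
    and "pd_mat Pstar" and "Pstar = schurH (hamQ A B S R Pstar)"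
    and "psd_mat P0"
  shows "\<exists>dstar>0. \<exists>\<beta> \<gamma>. class_KL \<beta> \<and> class_K \<gamma> \<and>
    (\<forall>dQ :: nat \<Rightarrow> real^('n+'m)^('n+'m).
        (\<forall>i. sym_mat (dQ i)) \<and> bdd_above (range (\<lambda>i. spec_norm (dQ i)))
        \<and> (SUP i. spec_norm (dQ i)) < dstar \<longrightarrow>
      (\<forall>i. invertible (blk_uu (hamQ A B S R (riccati_iter A B S R P0 dQ i) + dQ i))) \<and>
      (\<forall>i. spec_norm (riccati_iter A B S R P0 dQ i - Pstar)
             \<le> \<beta> (spec_norm (P0 - Pstar)) i + \<gamma> (SUP i. spec_norm (dQ i))))"
proof -
  obtain lam lamP p where "riccati_setting A B S R Pstar P0 lam lamP p"
    using riccati_setting_if_pd assms(1,2,4,5,6) by blast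
  then interpret riccati_setting A B S R Pstar P0 lam lamP p .
  have "0 < lam / 2"
    using lam_pos by simp
  then show ?thesis
    using class_KL_kl_bound class_K_linear[OF gain_pos] perturbed_iteration_bound
    unfolding r0_def by blast
qed

end
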